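(* Let $p>3$ be a prime. The number $N_{2,p}$ of $\overline{\mathbb{F}}_p$... more precisely, of $\mathbb{F}_p$-isomorphism classes of elliptic curves $E$ over $\mathbb{F}_p$ that possess an $\mathbb{F}_p$-rational point of order $2$ is \[ N_{2,p}=\begin{cases} \frac{4p+8}{3}, &\text{if } p\equiv 1\pmod{12},\\ \frac{4p+4}{3}, &\text{if } p\equiv 5\pmod{12},\\ \frac{4p+2}{3}, &\text{if } p\equiv 7\pmod{12},\\ \frac{4p-2}{3}, &\text{if } p\equiv 11\pmod{12}. \end{cases} \]
   Context: Isomorphism classes are taken over $\mathbb{F}_p$ (i.e., isomorphisms defined over $\mathbb{F}_p$). "Possessing 2-torsion over $\mathbb{F}_p$" means $E(\mathbb{F}_p)$ contains a point of order $2$, equivalently $2\mid \#E(\mathbb{F}_p)$. *)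

theory Defs
  imports "HOL-Number_Theory.Number_Theory"
begin

definition ec_curves :: "int \<Rightarrow> (int \<times> int) set" where
  "ec_curves p = {(a, b). a \<in> {0..<p} \<and> b \<in> {0..<p} \<and>
                          (4 * a ^ 3 + 27 * b ^ 2) mod p \<noteq> 0}"

text \<open>Affine F_p-rational points of the curve (the point at infinity O is extra).\<close>
definition on_curve :: "int \<Rightarrow> int \<times> int \<Rightarrow> int \<times> int \<Rightarrow> bool" where
  "on_curve p E P = (case E of (a, b) \<Rightarrow> case P of (x, y) \<Rightarrow>
      x \<in> {0..<p} \<and> y \<in> {0..<p} \<and> (y ^ 2 - (x ^ 3 + a * x + b)) mod p = 0)"

text \<open>A point of order 2 is a rational point P \<noteq> O with P = -P; for an affine
  point (x,y) the negative is (x,-y).\<close>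
definition has_2_torsion :: "int \<Rightarrow> int \<times> int \<Rightarrow> bool" where
  "has_2_torsion p E = (\<exists>x y. on_curve p E (x, y) \<and> y mod p = (- y) mod p)"

text \<open>F_p-isomorphism of short Weierstrass curves: (x,y) \<mapsto> (u^2 x, u^3 y),
  u \<in> F_p^*, i.e. a' = u^4 a and b' = u^6 b.\<close>
definition ec_iso :: "int \<Rightarrow> ((int \<times> int) \<times> (int \<times> int)) set" where
  "ec_iso p = {((a, b), (a', b')). (\<exists>u. u mod p \<noteq> 0 \<and>
       a' mod p = (u ^ 4 * a) mod p \<and> b' mod p = (u ^ 6 * b) mod p)}"

definition N2 :: "int \<Rightarrow> nat" where
  "N2 p = card ({E \<in> ec_curves p. has_2_torsion p E} // Restr (ec_iso p) {E \<in> ec_curves p. has_2_torsion p E})"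

end

theory Submission
  imports Defs
begin

(* A curve y^2 = x^3 + a x + b over F_p has a rational point of order 2 iff its cubic has a
   root in F_p.  Pairs (curve, root) are parametrised by (x, a), since b = -(x^3 + a x), and
   ordered pairs of distinct roots (x, y) determine the curve; counting these gives (p - 1)^2
   and (p - 1)(p - 2) respectively.  A nonsingular cubic has 1 or 3 roots, hence there are
   (p - 1)(2p - 1)/3 such curves.  The group F_p^* acts on them by u.(a, b) = (u^4 a, u^6 b),
   the isomorphism classes are the orbits, and the stabiliser of (a, b) is the group of k-th
   roots of unity with k = 6, 4, 2 according as a = 0, b = 0 or neither.  Summing
   gcd(k, p - 1)/(p - 1) over all curves, with (p - 1)/gcd(3, p - 1) curves having a = 0 and
   p - 1 curves having b = 0, gives
   N = (gcd(6, p - 1) - 2)/gcd(3, p - 1) + gcd(4, p - 1) + 4(p - 2)/3. *)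

section \<open>Residues modulo a prime\<close>

lemma cong_residues_iff_eq:
  fixes p x y :: int
  assumes "x \<in> {0..<p}" "y \<in> {0..<p}"
  shows "[x = y] (mod p) \<longleftrightarrow> x = y"
  using assms by (auto simp: cong_def)

lemma cong_minus_iff_dvd_add: "[a = - b] (mod m) \<longleftrightarrow> m dvd b + a"
  for a b m :: int
  by (simp add: cong_iff_dvd_diff add.commute)

lemma unit_residue_not_dvd: "x \<in> {1..<p} \<Longrightarrow> \<not> (p::int) dvd x"
  using zdvd_not_zless[of x p] by auto

lemma mod_mem_units:
  fixes p u :: int
  assumes "p > 0" "\<not> p dvd u"
  shows "u mod p \<in> {1..<p}"
proof -
  have "0 \<le> u mod p" "u mod p < p" "u mod p \<noteq> 0"
    using assms by (auto simp: dvd_eq_mod_eq_0)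
  then show ?thesis
    by simp
qed

lemma mult_mod_mem_units:
  fixes p u v :: int
  assumes "prime p" "u \<in> {1..<p}" "v \<in> {1..<p}"
  shows "(u * v) mod p \<in> {1..<p}"
  using assms mod_mem_units[OF prime_gt_0_int] unit_residue_not_dvd by (simp add: prime_dvd_mult_iff)

lemma linear_zero_mod_prime:
  fixes p c d :: int
  assumes p: "prime p" and c: "\<not> p dvd c"
  obtains r where "r \<in> {0..<p}" "\<And>y. p dvd c * y + d \<longleftrightarrow> [y = r] (mod p)"
proof -
  have cop: "coprime c p"
    using prime_imp_coprime[OF p c] by (simp add: coprime_commute)
  then obtain i where i: "[c * i = 1] (mod p)"
    using cong_solve_coprime_int by blast
  define r where "r = (- d * i) mod p"
  have "r \<in> {0..<p}"
    using p by (simp add: r_def prime_gt_0_int)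
  have "[c * r = c * (- d * i)] (mod p)"
    unfolding r_def by (intro cong_mult cong_refl) (simp add: cong_def)
  also have "c * (- d * i) = - d * (c * i)"
    by (simp add: ac_simps)
  also have "[- d * (c * i) = - d * 1] (mod p)"
    using i by (intro cong_mult cong_refl)
  finally have cr: "[c * r = - d] (mod p)"
    by simp
  moreover have "p dvd c * y + d \<longleftrightarrow> [y = r] (mod p)" for y
  proof -
    have "p dvd c * y + d \<longleftrightarrow> [c * y = - d] (mod p)"
      by (simp add: cong_iff_dvd_diff)
    also have "\<dots> \<longleftrightarrow> [c * y = c * r] (mod p)"
      using cr by (meson cong_sym cong_trans)
    also have "\<dots> \<longleftrightarrow> [y = r] (mod p)"
      using cong_mult_lcancel[OF cop] .
    finally show ?thesis .
  qed
  ultimately show thesis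
    using that \<open>r \<in> {0..<p}\<close> by blast
qed

lemma card_avoiding_two_linear_zeros:
  fixes p c d c' d' :: int
  assumes p: "prime p" and c: "\<not> p dvd c" and c': "\<not> p dvd c'"
  shows "int (card {y\<in>{0..<p}. \<not> p dvd c * y + d \<and> \<not> p dvd c' * y + d'}) =
           (if p dvd c * d' - c' * d then p - 1 else p - 2)"
proof -
  obtain r where r: "r \<in> {0..<p}" "\<And>y. p dvd c * y + d \<longleftrightarrow> [y = r] (mod p)"
    using linear_zero_mod_prime[OF p c] by metis
  obtain r' where r': "r' \<in> {0..<p}" "\<And>y. p dvd c' * y + d' \<longleftrightarrow> [y = r'] (mod p)"
    using linear_zero_mod_prime[OF p c'] by metis
  have set_eq: "{y\<in>{0..<p}. \<not> p dvd c * y + d \<and> \<not> p dvd c' * y + d'} = {0..<p} - {r, r'}"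
    using r r' cong_residues_iff_eq by auto
  have "c * (c' * r + d') = c' * (c * r + d) + (c * d' - c' * d)"
    by (simp add: algebra_simps)
  moreover have "p dvd c' * (c * r + d)"
    using r by simp
  ultimately have "p dvd c * (c' * r + d') \<longleftrightarrow> p dvd c * d' - c' * d"
    by (simp add: dvd_add_right_iff)
  moreover have "p dvd c * (c' * r + d') \<longleftrightarrow> r = r'"
    using p c r r' cong_residues_iff_eq by (simp add: prime_dvd_mult_iff)
  ultimately have "r = r' \<longleftrightarrow> p dvd c * d' - c' * d"
    by simp
  moreover have "card ({0..<p} - {r, r'}) = nat p - card {r, r'}"
    using r r' by (subst card_Diff_subset) auto
  moreover have "p > 1"
    using p prime_gt_1_int by blast
  ultimately show ?thesis
    unfolding set_eq by (cases "r = r'") auto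
qed

lemma prime_gt_3_not_dvd:
  fixes p :: int
  assumes "prime p" "p > 3"
  shows "\<not> p dvd 2" "\<not> p dvd 3"
  using assms zdvd_imp_le[of p 2] zdvd_imp_le[of p 3] by auto

lemma roots_of_unity_mod_prime_eq:
  fixes n k :: nat
  assumes n: "prime n" and k: "k > 0"
  shows "{x\<in>{1..<n}. [x ^ k = 1] (mod n)} = {x\<in>{..<n}. [x ^ gcd k (n - 1) = 1] (mod n)}"
proof (intro equalityI subsetI)
  fix x assume "x \<in> {x\<in>{1..<n}. [x ^ k = 1] (mod n)}"
  then have x: "x < n" "ord n x dvd k"
    by (auto simp: ord_divides')
  then have "coprime n x"
    using k ord_eq_0 by fastforce
  then have "ord n x dvd n - 1"
    using order_divides_totient totient_prime n by metis
  with x show "x \<in> {x\<in>{..<n}. [x ^ gcd k (n - 1) = 1] (mod n)}"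
    by (simp add: ord_divides')
next
  fix x assume "x \<in> {x\<in>{..<n}. [x ^ gcd k (n - 1) = 1] (mod n)}"
  then have x: "x < n" "[x ^ k = 1] (mod n)"
    using dvd_trans[of "ord n x" "gcd k (n - 1)" k] by (auto simp: ord_divides')
  moreover have "x \<noteq> 0"
    using x k prime_gt_1_nat[OF n] by (cases "x = 0") (auto simp: cong_def power_0_left)
  ultimately show "x \<in> {x\<in>{1..<n}. [x ^ k = 1] (mod n)}"
    by auto
qed

lemma card_roots_of_unity_dvd_pred:
  fixes n e :: nat
  assumes n: "prime n" and e: "e dvd n - 1"
  shows "card {x\<in>{..<n}. [x ^ e = 1] (mod n)} = e"
proof (cases "e = 1")
  case True
  then have "{x\<in>{..<n}. [x ^ e = 1] (mod n)} = {1}"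
    using prime_gt_1_nat[OF n] by (auto simp: cong_def)
  with True show ?thesis
    by simp
next
  case False
  have n1: "n > 1"
    using prime_gt_1_nat[OF n] .
  then have "e > 0"
    using e by (auto intro: Nat.gr0I)
  \<comment> \<open>a unit of order e exists because the unit group mod a prime is cyclic\<close>
  have elements_of_order_e: "card {x\<in>totatives n. ord n x = e} = totient e"
    using prime_card_elements_with_ord_eq_totient[OF n1 n] e by simp
  moreover have "totient e > 0"
    using \<open>e > 0\<close> by simp
  ultimately obtain a where a: "a \<in> totatives n" "ord n a = e"
    by (metis (mono_tags, lifting) card.empty empty_Collect_eq less_irrefl)
  with False have "a \<noteq> 1"
    by auto
  note powers = prime_elements_with_ord[OF n1 _ n a this]
  show ?thesis
    using elements_of_order_e \<open>totient e > 0\<close> powers(1,2) by (simp add: card_image)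
qed

lemma card_roots_of_unity_mod_prime:
  fixes n k :: nat
  assumes "prime n" "k > 0"
  shows "card {x\<in>{1..<n}. [x ^ k = 1] (mod n)} = gcd k (n - 1)"
  using roots_of_unity_mod_prime_eq[OF assms] card_roots_of_unity_dvd_pred[OF assms(1)] by simp

lemma card_roots_of_unity_mod_prime_int:
  fixes p :: int and k :: nat
  assumes p: "prime p" and k: "k > 0"
  shows "card {x\<in>{1..<p}. [x ^ k = 1] (mod p)} = gcd k (nat p - 1)"
proof -
  have "{x\<in>{1..<p}. [x ^ k = 1] (mod p)} = int ` {x\<in>{1..<nat p}. [x ^ k = 1] (mod nat p)}"
  proof (intro equalityI subsetI)
    fix x assume x: "x \<in> {x\<in>{1..<p}. [x ^ k = 1] (mod p)}"
    then have "[nat x ^ k = 1] (mod nat p)"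
      using cong_int_iff[of "nat x ^ k" 1 "nat p"] by simp
    with x show "x \<in> int ` {x\<in>{1..<nat p}. [x ^ k = 1] (mod nat p)}"
      by (intro image_eqI[of _ _ "nat x"]) auto
  next
    fix x assume "x \<in> int ` {x\<in>{1..<nat p}. [x ^ k = 1] (mod nat p)}"
    then obtain y where "x = int y" "1 \<le> y" "y < nat p" "[y ^ k = 1] (mod nat p)"
      by auto
    then show "x \<in> {x\<in>{1..<p}. [x ^ k = 1] (mod p)}"
      using cong_int_iff[of "y ^ k" 1 "nat p"] p prime_gt_0_int[of p] by auto
  qed
  then show ?thesis
    using card_roots_of_unity_mod_prime[of "nat p" k] p k by (simp add: card_image)
qed

lemma bij_betw_mult_mod_prime:
  fixes p c :: int
  assumes p: "prime p" and c: "\<not> p dvd c"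
  shows "bij_betw (\<lambda>v. (c * v) mod p) {1..<p} {1..<p}"
proof -
  have cop: "coprime c p"
    using prime_imp_coprime[OF p c] by (simp add: coprime_commute)
  have "inj_on (\<lambda>v. (c * v) mod p) {1..<p}"
    using cong_mult_lcancel[OF cop] by (auto simp: inj_on_def cong_def[symmetric] cong_residues_iff_eq)
  moreover have "(\<lambda>v. (c * v) mod p) ` {1..<p} \<subseteq> {1..<p}"
    using p c unit_residue_not_dvd mod_mem_units prime_gt_0_int by (auto simp: prime_dvd_mult_iff)
  ultimately show ?thesis
    by (simp add: bij_betw_def endo_inj_surj)
qed

lemma card_power_fiber_mod_prime:
  fixes p u :: int and k :: nat
  assumes p: "prime p" and k: "k > 0" and u: "u \<in> {1..<p}"
  shows "card {v\<in>{1..<p}. [v ^ k = u ^ k] (mod p)} = gcd k (nat p - 1)"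
proof -
  have "coprime u p"
    using prime_imp_coprime[OF p unit_residue_not_dvd[OF u]] by (simp add: coprime_commute)
  then obtain u' where "[u * u' = 1] (mod p)"
    using cong_solve_coprime_int by blast
  then have u': "[u' * u = 1] (mod p)"
    by (simp add: mult.commute)
  have "\<not> p dvd u'"
  proof
    assume "p dvd u'"
    then have "[u' * u = 0] (mod p)"
      by (simp add: cong_0_iff)
    with u' have "[0 = 1] (mod p)"
      by (meson cong_sym cong_trans)
    with prime_gt_1_int[OF p] show False
      by (simp add: cong_def)
  qed
  then have "coprime (u' ^ k) p"
    using prime_imp_coprime[OF p \<open>\<not> p dvd u'\<close>] by (simp add: coprime_commute)
  have "[v ^ k = u ^ k] (mod p) \<longleftrightarrow> [((u' * v) mod p) ^ k = 1] (mod p)" for v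
  proof -
    have "[(u' * u) ^ k = 1] (mod p)"
      using cong_pow[OF u'] by simp
    moreover have "[((u' * v) mod p) ^ k = (u' * v) ^ k] (mod p)"
      by (simp add: cong_def power_mod)
    ultimately have "[((u' * v) mod p) ^ k = 1] (mod p) \<longleftrightarrow> [(u' * v) ^ k = (u' * u) ^ k] (mod p)"
      by (simp add: cong_def)
    also have "\<dots> \<longleftrightarrow> [v ^ k = u ^ k] (mod p)"
      using cong_mult_lcancel[OF \<open>coprime (u' ^ k) p\<close>] by (simp add: power_mult_distrib)
    finally show ?thesis ..
  qed
  then have "{v\<in>{1..<p}. [v ^ k = u ^ k] (mod p)} = {v\<in>{1..<p}. [((u' * v) mod p) ^ k = 1] (mod p)}"
    by simp
  also have "card \<dots> = card {w\<in>{1..<p}. [w ^ k = 1] (mod p)}"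
    using bij_betw_same_card[OF bij_betw_Collect[OF bij_betw_mult_mod_prime[OF p \<open>\<not> p dvd u'\<close>],
          where Q = "\<lambda>w. [w ^ k = 1] (mod p)" and P = "\<lambda>v. [((u' * v) mod p) ^ k = 1] (mod p)"]]
    by simp
  also have "\<dots> = gcd k (nat p - 1)"
    using card_roots_of_unity_mod_prime_int[OF p k] .
  finally show ?thesis .
qed

lemma of_nat_mult_pred: "int (n * (n - 1)) = int n * (int n - 1)"
  by (cases n) (auto simp: algebra_simps)

lemma card_Sigma_Diff_singleton:
  "finite A \<Longrightarrow> card (SIGMA x:A. A - {x}) = card A * (card A - 1)"
  by (simp add: card_SigmaI)

lemma card_quotient_eq_sum_inverse_card_class:
  assumes eq: "equiv A r" and fin: "finite A"
  shows "real (card (A // r)) = (\<Sum>x\<in>A. 1 / real (card (r `` {x})))"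
proof -
  have fin_classes: "\<forall>X\<in>A // r. finite X"
    using in_quotient_imp_subset[OF eq] fin finite_subset by blast
  have disjoint: "\<forall>X\<in>A // r. \<forall>Y\<in>A // r. X \<noteq> Y \<longrightarrow> X \<inter> Y = {}"
    using quotient_disj[OF eq] by blast
  have "(\<Sum>x\<in>A. 1 / real (card (r `` {x}))) = (\<Sum>x\<in>\<Union>(A // r). 1 / real (card (r `` {x})))"
    by (simp add: Union_quotient[OF eq])
  also have "\<dots> = (\<Sum>X\<in>A // r. \<Sum>x\<in>X. 1 / real (card (r `` {x})))"
    using sum.Union_disjoint[OF fin_classes disjoint] by simp
  also have "\<dots> = (\<Sum>X\<in>A // r. 1)"
  proof (rule sum.cong[OF refl])
    fix X assume X: "X \<in> A // r"
    then obtain x0 where x0: "X = r `` {x0}"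
      by (rule quotientE)
    then have "r `` {x} = X" if "x \<in> X" for x
      using that equiv_class_eq[OF eq] by simp
    moreover have "card X > 0"
      using X fin_classes in_quotient_imp_non_empty[OF eq] by (simp add: card_gt_0_iff)
    ultimately show "(\<Sum>x\<in>X. 1 / real (card (r `` {x}))) = 1"
      by simp
  qed
  finally show ?thesis
    by simp
qed

lemma card_image_mult_const_fiber:
  assumes fin: "finite S" and fiber: "\<And>u. u \<in> S \<Longrightarrow> card {v\<in>S. f v = f u} = m"
  shows "card (f ` S) * m = card S"
proof -
  have "card S = card (\<Union>y\<in>f ` S. {v\<in>S. f v = y})"
    by (rule arg_cong[of _ _ card]) auto
  also have "\<dots> = (\<Sum>y\<in>f ` S. card {v\<in>S. f v = y})"
    using fin by (intro card_UN_disjoint) auto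
  also have "\<dots> = (\<Sum>y\<in>f ` S. m)"
    using fiber by (intro sum.cong) auto
  finally show ?thesis
    by simp
qed

section \<open>Curves with a rational point of order 2\<close>

fun cubic_roots :: "int \<Rightarrow> int \<times> int \<Rightarrow> int set" where
  "cubic_roots p (a, b) = {x\<in>{0..<p}. p dvd x ^ 3 + a * x + b}"

definition two_torsion_curves :: "int \<Rightarrow> (int \<times> int) set" where
  "two_torsion_curves p = {E \<in> ec_curves p. has_2_torsion p E}"

lemma has_2_torsion_iff_cubic_root:
  fixes p a b :: int
  assumes p: "prime p" "p > 2"
  shows "has_2_torsion p (a, b) \<longleftrightarrow> cubic_roots p (a, b) \<noteq> {}"
proof
  assume "has_2_torsion p (a, b)"
  then obtain x y where x: "x \<in> {0..<p}" and y: "y \<in> {0..<p}" "[y = - y] (mod p)"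
    and on_curve: "p dvd y ^ 2 - (x ^ 3 + a * x + b)"
    by (auto simp: has_2_torsion_def on_curve_def cong_def dvd_eq_mod_eq_0)
  have "\<not> p dvd 2"
    using p zdvd_imp_le[of p 2] by auto
  moreover have "p dvd 2 * y"
    using y by (simp add: cong_iff_dvd_diff)
  ultimately have "p dvd y ^ 2"
    using p by (simp add: prime_dvd_mult_iff power2_eq_square)
  with on_curve have "p dvd x ^ 3 + a * x + b"
    using dvd_diff_right_iff by blast
  with x show "cubic_roots p (a, b) \<noteq> {}"
    by auto
next
  assume "cubic_roots p (a, b) \<noteq> {}"
  then obtain x where "x \<in> {0..<p}" "p dvd x ^ 3 + a * x + b"
    by auto
  moreover have "(0 ^ 2 - (x ^ 3 + a * x + b)) mod p = 0"
    using \<open>p dvd x ^ 3 + a * x + b\<close> by (metis dvd_minus_iff diff_0 power_zero_numeral mod_eq_0_iff_dvd)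
  ultimately have "on_curve p (a, b) (x, 0)"
    using p by (simp add: on_curve_def)
  then show "has_2_torsion p (a, b)"
    unfolding has_2_torsion_def by force
qed

lemma mem_two_torsion_curves_iff:
  assumes "prime p" "p > 2"
  shows "(a, b) \<in> two_torsion_curves p \<longleftrightarrow>
    a \<in> {0..<p} \<and> b \<in> {0..<p} \<and> \<not> p dvd 4 * a ^ 3 + 27 * b ^ 2 \<and> cubic_roots p (a, b) \<noteq> {}"
  using has_2_torsion_iff_cubic_root[OF assms]
  by (auto simp: two_torsion_curves_def ec_curves_def dvd_eq_mod_eq_0 simp del: cubic_roots.simps)

lemma two_torsion_curves_subset: "two_torsion_curves p \<subseteq> {0..<p} \<times> {0..<p}"
  by (auto simp: two_torsion_curves_def ec_curves_def)

lemma finite_two_torsion_curves: "finite (two_torsion_curves p)"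
  using two_torsion_curves_subset by (rule finite_subset) simp

lemma finite_cubic_roots: "finite (cubic_roots p E)"
  by (cases E) (auto intro: finite_subset[of _ "{0..<p}"])

lemma discriminant_cong_given_root:
  fixes p a b x :: int
  assumes "p dvd x ^ 3 + a * x + b"
  shows "[4 * a ^ 3 + 27 * b ^ 2 = (3 * x ^ 2 + a) ^ 2 * (4 * a + 3 * x ^ 2)] (mod p)"
proof -
  have "[b = - (x ^ 3 + a * x)] (mod p)"
    using assms by (simp only: cong_minus_iff_dvd_add)
  then have "[4 * a ^ 3 + 27 * b ^ 2 = 4 * a ^ 3 + 27 * (- (x ^ 3 + a * x)) ^ 2] (mod p)"
    by (intro cong_add cong_mult cong_pow cong_refl)
  also have "4 * a ^ 3 + 27 * (- (x ^ 3 + a * x)) ^ 2 = (3 * x ^ 2 + a) ^ 2 * (4 * a + 3 * x ^ 2)"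
    by (simp add: algebra_simps power2_eq_square power3_eq_cube)
  finally show ?thesis .
qed

lemma coefficients_cong_from_two_roots:
  fixes p a b x y :: int
  assumes p: "prime p" and x: "p dvd x ^ 3 + a * x + b" and y: "p dvd y ^ 3 + a * y + b"
    and xy: "\<not> p dvd x - y"
  shows "[a = - (x ^ 2 + x * y + y ^ 2)] (mod p)" "[b = x * y * (x + y)] (mod p)"
proof -
  have "(x ^ 3 + a * x + b) - (y ^ 3 + a * y + b) = (x - y) * (x ^ 2 + x * y + y ^ 2 + a)"
    by (simp add: algebra_simps power2_eq_square power3_eq_cube)
  then have "p dvd (x - y) * (x ^ 2 + x * y + y ^ 2 + a)"
    using x y by (metis dvd_diff)
  then have "p dvd x ^ 2 + x * y + y ^ 2 + a"
    using p xy by (simp add: prime_dvd_mult_iff)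
  then show a: "[a = - (x ^ 2 + x * y + y ^ 2)] (mod p)"
    by (simp only: cong_minus_iff_dvd_add)
  have "[b = - (x ^ 3 + a * x)] (mod p)"
    using x by (simp only: cong_minus_iff_dvd_add)
  also have "[- (x ^ 3 + a * x) = - (x ^ 3 + (- (x ^ 2 + x * y + y ^ 2)) * x)] (mod p)"
    using a by (intro cong_uminus cong_add cong_mult cong_refl)
  also have "- (x ^ 3 + (- (x ^ 2 + x * y + y ^ 2)) * x) = x * y * (x + y)"
    by (simp add: algebra_simps power2_eq_square power3_eq_cube)
  finally show "[b = x * y * (x + y)] (mod p)" .
qed

lemma cong_cubic_with_two_roots:
  fixes p a b x y w :: int
  assumes a: "[a = - (x ^ 2 + x * y + y ^ 2)] (mod p)" and b: "[b = x * y * (x + y)] (mod p)"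
  shows "[w ^ 3 + a * w + b = (w - x) * (w - y) * (w + x + y)] (mod p)"
    and "[4 * a ^ 3 + 27 * b ^ 2 = - (((x - y) * (x + 2 * y) * (2 * x + y)) ^ 2)] (mod p)"
proof -
  have "[w ^ 3 + a * w + b = w ^ 3 + (- (x ^ 2 + x * y + y ^ 2)) * w + x * y * (x + y)] (mod p)"
    using a b by (intro cong_add cong_mult cong_refl)
  also have "w ^ 3 + (- (x ^ 2 + x * y + y ^ 2)) * w + x * y * (x + y) = (w - x) * (w - y) * (w + x + y)"
    by (simp add: algebra_simps power2_eq_square power3_eq_cube)
  finally show "[w ^ 3 + a * w + b = (w - x) * (w - y) * (w + x + y)] (mod p)" .
  have "[4 * a ^ 3 + 27 * b ^ 2 = 4 * (- (x ^ 2 + x * y + y ^ 2)) ^ 3 + 27 * (x * y * (x + y)) ^ 2] (mod p)"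
    using a b by (intro cong_add cong_mult cong_pow cong_refl)
  also have "4 * (- (x ^ 2 + x * y + y ^ 2)) ^ 3 + 27 * (x * y * (x + y)) ^ 2
      = - (((x - y) * (x + 2 * y) * (2 * x + y)) ^ 2)"
    by (simp add: algebra_simps power2_eq_square power3_eq_cube)
  finally show "[4 * a ^ 3 + 27 * b ^ 2 = - (((x - y) * (x + 2 * y) * (2 * x + y)) ^ 2)] (mod p)" .
qed

lemma nonsingular_distinct_roots:
  fixes p a b x y :: int
  assumes p: "prime p" and nonsingular: "\<not> p dvd 4 * a ^ 3 + 27 * b ^ 2"
    and x: "x \<in> cubic_roots p (a, b)" and y: "y \<in> cubic_roots p (a, b)" and "x \<noteq> y"
  shows "\<not> p dvd x - y" "\<not> p dvd x + 2 * y" "\<not> p dvd 2 * x + y"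
proof -
  have x': "x \<in> {0..<p}" "p dvd x ^ 3 + a * x + b" and y': "y \<in> {0..<p}" "p dvd y ^ 3 + a * y + b"
    using x y by auto
  show "\<not> p dvd x - y"
    using x'(1) y'(1) \<open>x \<noteq> y\<close> cong_residues_iff_eq by (simp add: cong_iff_dvd_diff)
  note cubic = cong_cubic_with_two_roots[OF coefficients_cong_from_two_roots[OF p x'(2) y'(2) this]]
  have "\<not> p dvd ((x - y) * (x + 2 * y) * (2 * x + y)) ^ 2"
    using nonsingular cong_dvd_iff[OF cubic(2)] by simp
  then show "\<not> p dvd x + 2 * y" "\<not> p dvd 2 * x + y"
    using p by (simp_all add: prime_dvd_mult_iff prime_dvd_power_iff)
qed

lemma cubic_roots_eq_three:
  fixes p a b x y :: int
  assumes p: "prime p" and nonsingular: "\<not> p dvd 4 * a ^ 3 + 27 * b ^ 2"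
    and x: "x \<in> cubic_roots p (a, b)" and y: "y \<in> cubic_roots p (a, b)" and "x \<noteq> y"
  shows "cubic_roots p (a, b) = {x, y, (- x - y) mod p}" "card (cubic_roots p (a, b)) = 3"
proof -
  define z where "z = (- x - y) mod p"
  note distinct = nonsingular_distinct_roots[OF assms]
  have x': "x \<in> {0..<p}" "p dvd x ^ 3 + a * x + b" and y': "y \<in> {0..<p}" "p dvd y ^ 3 + a * y + b"
    using x y by auto
  note cubic = cong_cubic_with_two_roots[OF coefficients_cong_from_two_roots[OF p x'(2) y'(2) distinct(1)]]
  have z_cong: "[z = - x - y] (mod p)"
    by (simp add: z_def cong_def)
  have "z \<noteq> x" "z \<noteq> y"
    using z_cong distinct(2,3) by (auto simp: cong_iff_dvd_diff algebra_simps)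
  have "[w + x + y = w - z] (mod p)" for w
    using z_cong by (simp add: cong_iff_dvd_diff algebra_simps)
  then have factor: "[w ^ 3 + a * w + b = (w - x) * (w - y) * (w - z)] (mod p)" for w
    using cubic(1)[of w] cong_trans cong_mult[OF cong_refl] by blast
  have root_iff: "p dvd w ^ 3 + a * w + b \<longleftrightarrow> [w = x] (mod p) \<or> [w = y] (mod p) \<or> [w = z] (mod p)" for w
    using cong_dvd_iff[OF factor[of w]] p by (simp add: prime_dvd_mult_iff cong_iff_dvd_diff)
  have "z \<in> {0..<p}"
    using p prime_gt_0_int by (simp add: z_def)
  then have "cubic_roots p (a, b) = {x, y, z}"
    using x'(1) y'(1) root_iff cong_residues_iff_eq by auto
  then show "cubic_roots p (a, b) = {x, y, (- x - y) mod p}" "card (cubic_roots p (a, b)) = 3"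
    using \<open>x \<noteq> y\<close> \<open>z \<noteq> x\<close> \<open>z \<noteq> y\<close> by (simp_all add: z_def)
qed

lemma card_cubic_roots_1_or_3:
  assumes p: "prime p" "p > 2" and E: "E \<in> two_torsion_curves p"
  shows "card (cubic_roots p E) = 1 \<or> card (cubic_roots p E) = 3"
proof -
  obtain a b where ab: "E = (a, b)"
    by fastforce
  with E have nonsingular: "\<not> p dvd 4 * a ^ 3 + 27 * b ^ 2"
    and "cubic_roots p (a, b) \<noteq> {}"
    using mem_two_torsion_curves_iff[OF p] by blast+
  then obtain x where x: "x \<in> cubic_roots p (a, b)"
    by blast
  show ?thesis
  proof (cases "cubic_roots p (a, b) = {x}")
    case True
    then show ?thesis
      by (simp add: ab)
  next
    case False
    with x obtain y where "y \<in> cubic_roots p (a, b)" "x \<noteq> y"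
      by blast
    then show ?thesis
      using cubic_roots_eq_three(2)[OF p(1) nonsingular x] by (simp add: ab)
  qed
qed

lemma two_torsion_curve_with_two_roots:
  fixes p x y :: int
  assumes p: "prime p" "p > 2" and x: "x \<in> {0..<p}" and y: "y \<in> {0..<p}"
    and nonzero: "\<not> p dvd x - y" "\<not> p dvd x + 2 * y" "\<not> p dvd 2 * x + y"
  defines "E \<equiv> ((- (x ^ 2 + x * y + y ^ 2)) mod p, (x * y * (x + y)) mod p)"
  shows "E \<in> two_torsion_curves p" "x \<in> cubic_roots p E" "y \<in> cubic_roots p E"
proof -
  obtain a b where E: "E = (a, b)"
    by fastforce
  then have coeffs: "[a = - (x ^ 2 + x * y + y ^ 2)] (mod p)" "[b = x * y * (x + y)] (mod p)"
    and range: "a \<in> {0..<p}" "b \<in> {0..<p}"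
    using p prime_gt_0_int[of p] by (auto simp: E_def cong_def)
  note cubic = cong_cubic_with_two_roots[OF coeffs]
  show "x \<in> cubic_roots p E" "y \<in> cubic_roots p E"
    using x y cong_dvd_iff[OF cubic(1)[of x]] cong_dvd_iff[OF cubic(1)[of y]] by (simp_all add: E)
  moreover have "\<not> p dvd 4 * a ^ 3 + 27 * b ^ 2"
    using nonzero p(1) cong_dvd_iff[OF cubic(2)] by (simp add: prime_dvd_mult_iff prime_dvd_power_iff)
  ultimately show "E \<in> two_torsion_curves p"
    using range mem_two_torsion_curves_iff[OF p] by (auto simp: E simp del: cubic_roots.simps)
qed

definition curves_with_root :: "int \<Rightarrow> ((int \<times> int) \<times> int) set" where
  "curves_with_root p = (SIGMA E:two_torsion_curves p. cubic_roots p E)"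

definition curves_with_two_roots :: "int \<Rightarrow> ((int \<times> int) \<times> int \<times> int) set" where
  "curves_with_two_roots p =
    (SIGMA E:two_torsion_curves p. SIGMA x:cubic_roots p E. cubic_roots p E - {x})"

lemma cong_b_of_curve_with_root:
  "((a, b), x) \<in> curves_with_root p \<Longrightarrow> [b = - (x ^ 3 + a * x)] (mod p)"
  unfolding curves_with_root_def by (simp only: cong_minus_iff_dvd_add) simp

lemma inj_on_curves_with_root_param: "inj_on (\<lambda>(E, x). (x, fst E)) (curves_with_root p)"
proof (rule inj_onI)
  fix u v assume u: "u \<in> curves_with_root p" and v: "v \<in> curves_with_root p"
    and eq: "(\<lambda>(E, x). (x, fst E)) u = (\<lambda>(E, x). (x, fst E)) v"
  obtain a b x a' b' x' where uv: "u = ((a, b), x)" "v = ((a', b'), x')"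
    by (metis prod.collapse)
  with eq have "a' = a" "x' = x"
    by simp_all
  with u v uv have "[b = b'] (mod p)"
    using cong_b_of_curve_with_root by (meson cong_sym cong_trans)
  moreover have "b \<in> {0..<p}" "b' \<in> {0..<p}"
    using u v uv by (auto simp: curves_with_root_def dest!: subsetD[OF two_torsion_curves_subset])
  ultimately have "b = b'"
    using cong_residues_iff_eq by blast
  with uv \<open>a' = a\<close> \<open>x' = x\<close> show "u = v"
    by simp
qed

lemma curves_with_root_param_image:
  assumes p: "prime p" "p > 2"
  shows "(\<lambda>(E, x). (x, fst E)) ` curves_with_root p =
    (SIGMA x:{0..<p}. {a\<in>{0..<p}. \<not> p dvd a + 3 * x ^ 2 \<and> \<not> p dvd 4 * a + 3 * x ^ 2})"
    (is "?image = ?R")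
proof (intro equalityI subsetI)
  note G_iff = mem_two_torsion_curves_iff[OF p]
  fix z assume "z \<in> ?image"
  then obtain a b x where S: "((a, b), x) \<in> curves_with_root p" and z: "z = (x, a)"
    by (auto simp: curves_with_root_def)
  then have "\<not> p dvd (3 * x ^ 2 + a) ^ 2 * (4 * a + 3 * x ^ 2)"
    using G_iff cong_dvd_iff[OF discriminant_cong_given_root] by (auto simp: curves_with_root_def)
  with S show "z \<in> ?R"
    using p(1) G_iff
    by (auto simp: z curves_with_root_def prime_dvd_mult_iff prime_dvd_power_iff add.commute)
next
  note G_iff = mem_two_torsion_curves_iff[OF p]
  fix z assume "z \<in> ?R"
  then obtain x a where z: "z = (x, a)" and x: "x \<in> {0..<p}" and a: "a \<in> {0..<p}"
    and nonzero: "\<not> p dvd a + 3 * x ^ 2" "\<not> p dvd 4 * a + 3 * x ^ 2"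
    by auto
  define b where "b = (- (x ^ 3 + a * x)) mod p"
  have root: "p dvd x ^ 3 + a * x + b"
    using cong_minus_iff_dvd_add[of b "x ^ 3 + a * x" p] by (simp add: b_def cong_def)
  have "\<not> p dvd (3 * x ^ 2 + a) ^ 2 * (4 * a + 3 * x ^ 2)"
    using p(1) nonzero by (simp add: prime_dvd_mult_iff prime_dvd_power_iff add.commute)
  then have "((a, b), x) \<in> curves_with_root p"
    using root x a p G_iff cong_dvd_iff[OF discriminant_cong_given_root[OF root]]
    by (auto simp: b_def curves_with_root_def)
  then show "z \<in> ?image"
    by (force simp: z)
qed

lemma card_curves_with_root_params_fiber:
  fixes p x :: int
  assumes p: "prime p" "p > 3" and x: "x \<in> {0..<p}"
  shows "int (card {a\<in>{0..<p}. \<not> p dvd a + 3 * x ^ 2 \<and> \<not> p dvd 4 * a + 3 * x ^ 2}) =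
      (if x = 0 then p - 1 else p - 2)"
proof -
  have "3 * x ^ 2 - 4 * (3 * x ^ 2) = - (9 * x ^ 2)"
    by simp
  then have "p dvd 3 * x ^ 2 - 4 * (3 * x ^ 2) \<longleftrightarrow> p dvd 9 * x ^ 2"
    by simp
  also have "\<dots> \<longleftrightarrow> p dvd x"
    using prime_dvd_mult_iff[OF p(1), of 3 3] prime_gt_3_not_dvd[OF p]
    by (simp add: prime_dvd_mult_iff[OF p(1)] prime_dvd_power_iff[OF p(1)])
  also have "\<dots> \<longleftrightarrow> x = 0"
    using x zdvd_not_zless[of x p] by (cases "x = 0") auto
  finally have det: "p dvd 3 * x ^ 2 - 4 * (3 * x ^ 2) \<longleftrightarrow> x = 0" .
  have "\<not> p dvd 4"
    using prime_dvd_mult_iff[OF p(1), of 2 2] prime_gt_3_not_dvd[OF p] by simp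
  moreover have "\<not> p dvd 1"
    using p by simp
  ultimately have "int (card {a\<in>{0..<p}. \<not> p dvd 1 * a + 3 * x ^ 2 \<and> \<not> p dvd 4 * a + 3 * x ^ 2}) =
      (if p dvd 1 * (3 * x ^ 2) - 4 * (3 * x ^ 2) then p - 1 else p - 2)"
    using card_avoiding_two_linear_zeros[OF p(1)] by blast
  then show ?thesis
    by (simp only: det mult_1)
qed

lemma card_curves_with_root_params:
  fixes p :: int
  assumes p: "prime p" "p > 3"
  shows "int (card (SIGMA x:{0..<p}. {a\<in>{0..<p}. \<not> p dvd a + 3 * x ^ 2 \<and> \<not> p dvd 4 * a + 3 * x ^ 2}))
           = (p - 1) ^ 2"
proof -
  have "int (card (SIGMA x:{0..<p}. {a\<in>{0..<p}. \<not> p dvd a + 3 * x ^ 2 \<and> \<not> p dvd 4 * a + 3 * x ^ 2}))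
      = (\<Sum>x\<in>{0..<p}. int (card {a\<in>{0..<p}. \<not> p dvd a + 3 * x ^ 2 \<and> \<not> p dvd 4 * a + 3 * x ^ 2}))"
    by (subst card_SigmaI) (auto simp: of_nat_sum intro: finite_subset[of _ "{0..<p}"])
  also have "\<dots> = (\<Sum>x\<in>{0..<p}. if x = 0 then p - 1 else p - 2)"
    by (rule sum.cong[OF refl]) (rule card_curves_with_root_params_fiber[OF p])
  also have "\<dots> = (p - 1) + (\<Sum>x\<in>{1..<p}. p - 2)"
  proof -
    have "{0..<p} = insert 0 {1..<p}"
      using p by auto
    then show ?thesis
      by (simp add: sum.cong[of "{1..<p}" "{1..<p}" "\<lambda>x. if x = 0 then p - 1 else p - 2" "\<lambda>_. p - 2"])
  qed
  also have "\<dots> = (p - 1) ^ 2"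
    using p by (simp add: power2_eq_square algebra_simps)
  finally show ?thesis .
qed

lemma card_curves_with_root:
  assumes p: "prime p" "p > 3"
  shows "int (card (curves_with_root p)) = (p - 1) ^ 2"
proof -
  have "card (curves_with_root p) = card ((\<lambda>(E, x). (x, fst E)) ` curves_with_root p)"
    using card_image[OF inj_on_curves_with_root_param] by simp
  also have "\<dots> = card (SIGMA x:{0..<p}. {a\<in>{0..<p}. \<not> p dvd a + 3 * x ^ 2 \<and> \<not> p dvd 4 * a + 3 * x ^ 2})"
    using p by (simp add: curves_with_root_param_image)
  finally show ?thesis
    using card_curves_with_root_params[OF p] by simp
qed

lemma coeffs_of_curve_with_two_roots:
  assumes "prime p" "((a, b), x, y) \<in> curves_with_two_roots p"
  shows "[a = - (x ^ 2 + x * y + y ^ 2)] (mod p)" "[b = x * y * (x + y)] (mod p)"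
proof -
  have "\<not> p dvd x - y"
    using assms(2) cong_residues_iff_eq[of x p y] by (auto simp: curves_with_two_roots_def cong_iff_dvd_diff)
  with assms show "[a = - (x ^ 2 + x * y + y ^ 2)] (mod p)" "[b = x * y * (x + y)] (mod p)"
    using coefficients_cong_from_two_roots[OF assms(1)] by (auto simp: curves_with_two_roots_def)
qed

lemma inj_on_curves_with_two_roots_param:
  assumes p: "prime p"
  shows "inj_on (\<lambda>(E, x, y). ((y - x) mod p, x)) (curves_with_two_roots p)"
proof (rule inj_onI)
  fix u v assume u: "u \<in> curves_with_two_roots p" and v: "v \<in> curves_with_two_roots p"
    and eq: "(\<lambda>(E, x, y). ((y - x) mod p, x)) u = (\<lambda>(E, x, y). ((y - x) mod p, x)) v"
  obtain a b x y a' b' x' y' where uv: "u = ((a, b), x, y)" "v = ((a', b'), x', y')"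
    by (metis prod.collapse)
  with eq have "x' = x" "p dvd y - y'"
    by (auto simp: mod_eq_dvd_iff)
  with u v uv have "y' = y"
    using cong_residues_iff_eq[of y p y'] by (auto simp: curves_with_two_roots_def cong_iff_dvd_diff)
  with u v uv \<open>x' = x\<close> have "[a = - (x ^ 2 + x * y + y ^ 2)] (mod p)" "[b = x * y * (x + y)] (mod p)"
    and "[a' = - (x ^ 2 + x * y + y ^ 2)] (mod p)" "[b' = x * y * (x + y)] (mod p)"
    using coeffs_of_curve_with_two_roots[OF p] by simp_all
  then have "[a = a'] (mod p)" "[b = b'] (mod p)"
    by (meson cong_sym cong_trans)+
  moreover have "a \<in> {0..<p}" "b \<in> {0..<p}" "a' \<in> {0..<p}" "b' \<in> {0..<p}"
    using u v uv by (auto simp: curves_with_two_roots_def dest!: subsetD[OF two_torsion_curves_subset])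
  ultimately have "a = a'" "b = b'"
    using cong_residues_iff_eq by blast+
  with uv \<open>x' = x\<close> \<open>y' = y\<close> show "u = v"
    by simp
qed

lemma cong_shift_dvd_iff:
  fixes p x y s :: int
  assumes "[y = x + s] (mod p)"
  shows "p dvd x - y \<longleftrightarrow> p dvd s" "p dvd x + 2 * y \<longleftrightarrow> p dvd 3 * x + 2 * s"
    "p dvd 2 * x + y \<longleftrightarrow> p dvd 3 * x + s"
proof -
  have "[x - y = - s] (mod p)"
    using cong_diff[OF cong_refl[of x] assms] by simp
  then show "p dvd x - y \<longleftrightarrow> p dvd s"
    using cong_dvd_iff by fastforce
  have "[x + 2 * y = 3 * x + 2 * s] (mod p)"
    using cong_add[OF cong_refl[of x] cong_mult[OF cong_refl[of 2] assms]] by (simp add: algebra_simps)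
  then show "p dvd x + 2 * y \<longleftrightarrow> p dvd 3 * x + 2 * s"
    by (rule cong_dvd_iff)
  have "[2 * x + y = 3 * x + s] (mod p)"
    using cong_add[OF cong_refl[of "2 * x"] assms] by (simp add: algebra_simps)
  then show "p dvd 2 * x + y \<longleftrightarrow> p dvd 3 * x + s"
    by (rule cong_dvd_iff)
qed

lemma curves_with_two_roots_param_image:
  assumes p: "prime p" "p > 2"
  shows "(\<lambda>(E, x, y). ((y - x) mod p, x)) ` curves_with_two_roots p =
    (SIGMA s:{1..<p}. {x\<in>{0..<p}. \<not> p dvd 3 * x + s \<and> \<not> p dvd 3 * x + 2 * s})"
    (is "?image = ?R")
proof (intro equalityI subsetI)
  fix z assume "z \<in> ?image"
  then obtain u where u: "u \<in> curves_with_two_roots p" "z = (\<lambda>(E, x, y). ((y - x) mod p, x)) u"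
    by blast
  obtain a b x y where "u = ((a, b), x, y)"
    by (metis prod.collapse)
  with u have x: "x \<in> cubic_roots p (a, b)" and y: "y \<in> cubic_roots p (a, b)" "x \<noteq> y"
    and nonsingular: "\<not> p dvd 4 * a ^ 3 + 27 * b ^ 2" and z: "z = ((y - x) mod p, x)"
    using mem_two_torsion_curves_iff[OF p]
    by (auto simp: curves_with_two_roots_def simp del: cubic_roots.simps)
  have "[y = x + (y - x) mod p] (mod p)"
    by (simp add: cong_def mod_add_right_eq)
  note shift = cong_shift_dvd_iff[OF this]
  have "\<not> p dvd y - x"
    using nonsingular_distinct_roots(1)[OF p(1) nonsingular x y] by (simp add: dvd_diff_commute)
  then have "(y - x) mod p \<in> {1..<p}"
    using mod_mem_units prime_gt_0_int p(1) by blast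
  with x show "z \<in> ?R"
    using nonsingular_distinct_roots(2,3)[OF p(1) nonsingular x y] shift(2,3) by (simp add: z)
next
  fix z assume "z \<in> ?R"
  then obtain s x where z: "z = (s, x)" and s: "s \<in> {1..<p}" and x: "x \<in> {0..<p}"
    and nonzero: "\<not> p dvd 3 * x + s" "\<not> p dvd 3 * x + 2 * s"
    by auto
  define y where "y = (x + s) mod p"
  have y_cong: "[y = x + s] (mod p)"
    by (simp add: y_def cong_def)
  note shift = cong_shift_dvd_iff[OF y_cong]
  have y: "y \<in> {0..<p}"
    using p prime_gt_0_int[of p] by (simp add: y_def)
  have distinct: "\<not> p dvd x - y" "\<not> p dvd x + 2 * y" "\<not> p dvd 2 * x + y"
    using shift nonzero unit_residue_not_dvd[OF s] by simp_all
  define E where "E = ((- (x ^ 2 + x * y + y ^ 2)) mod p, (x * y * (x + y)) mod p)"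
  have "E \<in> two_torsion_curves p" "x \<in> cubic_roots p E" "y \<in> cubic_roots p E"
    using two_torsion_curve_with_two_roots[OF p x y distinct] by (simp_all only: E_def)
  moreover have "y \<noteq> x"
    using distinct(1) by auto
  ultimately have "(E, x, y) \<in> curves_with_two_roots p"
    by (simp add: curves_with_two_roots_def del: cubic_roots.simps)
  moreover have "z = (\<lambda>(E, x, y). ((y - x) mod p, x)) (E, x, y)"
    using cong_diff[OF y_cong cong_refl[of x]] s by (simp add: z cong_def)
  ultimately show "z \<in> ?image"
    by (rule rev_image_eqI)
qed

lemma card_curves_with_two_roots_params:
  fixes p :: int
  assumes p: "prime p" "p > 3"
  shows "int (card (SIGMA s:{1..<p}. {x\<in>{0..<p}. \<not> p dvd 3 * x + s \<and> \<not> p dvd 3 * x + 2 * s}))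
           = (p - 1) * (p - 2)"
proof -
  have "int (card {x\<in>{0..<p}. \<not> p dvd 3 * x + s \<and> \<not> p dvd 3 * x + 2 * s}) = p - 2"
    if "s \<in> {1..<p}" for s
  proof -
    have "\<not> p dvd 3 * (2 * s) - 3 * s"
      using that p(1) prime_gt_3_not_dvd[OF p] unit_residue_not_dvd by (simp add: prime_dvd_mult_iff)
    then show ?thesis
      using card_avoiding_two_linear_zeros[OF p(1), of 3 3 s "2 * s"] prime_gt_3_not_dvd[OF p] by simp
  qed
  then have "int (card (SIGMA s:{1..<p}. {x\<in>{0..<p}. \<not> p dvd 3 * x + s \<and> \<not> p dvd 3 * x + 2 * s}))
      = (\<Sum>s\<in>{1..<p}. p - 2)"
    by (subst card_SigmaI) (auto simp: of_nat_sum intro: finite_subset[of _ "{0..<p}"])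
  also have "\<dots> = (p - 1) * (p - 2)"
    using p by simp
  finally show ?thesis .
qed

lemma card_curves_with_two_roots:
  assumes p: "prime p" "p > 3"
  shows "int (card (curves_with_two_roots p)) = (p - 1) * (p - 2)"
proof -
  have "card (curves_with_two_roots p) = card ((\<lambda>(E, x, y). ((y - x) mod p, x)) ` curves_with_two_roots p)"
    using card_image[OF inj_on_curves_with_two_roots_param[OF p(1)]] by simp
  also have "\<dots> = card (SIGMA s:{1..<p}. {x\<in>{0..<p}. \<not> p dvd 3 * x + s \<and> \<not> p dvd 3 * x + 2 * s})"
    using p by (simp add: curves_with_two_roots_param_image)
  finally show ?thesis
    using card_curves_with_two_roots_params[OF p] by simp
qed

lemma card_two_torsion_curves:
  fixes p :: int
  assumes p: "prime p" "p > 3"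
  shows "3 * int (card (two_torsion_curves p)) = (p - 1) * (2 * p - 1)"
proof -
  let ?G = "two_torsion_curves p"
  define r where "r E = int (card (cubic_roots p E))" for E
  have fin: "finite ?G" "finite (cubic_roots p E)" for E
    by (simp_all add: finite_two_torsion_curves finite_cubic_roots)
  have roots: "int (card (curves_with_root p)) = (\<Sum>E\<in>?G. r E)"
    using fin by (simp add: curves_with_root_def card_SigmaI of_nat_sum r_def)
  have "card (curves_with_two_roots p) = (\<Sum>E\<in>?G. card (cubic_roots p E) * (card (cubic_roots p E) - 1))"
    using fin by (simp add: curves_with_two_roots_def card_SigmaI card_Sigma_Diff_singleton)
  then have "int (card (curves_with_two_roots p)) =
      int (\<Sum>E\<in>?G. card (cubic_roots p E) * (card (cubic_roots p E) - 1))"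
    by simp
  also have "\<dots> = (\<Sum>E\<in>?G. r E * (r E - 1))"
    by (simp only: of_nat_sum of_nat_mult_pred r_def)
  finally have root_pairs: "int (card (curves_with_two_roots p)) = (\<Sum>E\<in>?G. r E * (r E - 1))" .
  \<comment> \<open>3 = 3 r - r (r - 1) holds for r = 1 and r = 3\<close>
  have "3 * int (card ?G) = (\<Sum>E\<in>?G. 3)"
    by simp
  also have "\<dots> = (\<Sum>E\<in>?G. 3 * r E - r E * (r E - 1))"
  proof (rule sum.cong[OF refl])
    fix E assume "E \<in> ?G"
    then show "3 = 3 * r E - r E * (r E - 1)"
      using card_cubic_roots_1_or_3[of p E] p by (auto simp: r_def)
  qed
  also have "\<dots> = 3 * (p - 1) ^ 2 - (p - 1) * (p - 2)"
    using roots root_pairs card_curves_with_root[OF p] card_curves_with_two_roots[OF p]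
    by (simp add: sum_subtractf sum_distrib_left)
  also have "\<dots> = (p - 1) * (2 * p - 1)"
    by (simp add: power2_eq_square algebra_simps)
  finally show ?thesis .
qed

section \<open>Isomorphism classes as orbits\<close>

fun scale :: "int \<Rightarrow> int \<Rightarrow> int \<times> int \<Rightarrow> int \<times> int" where
  "scale p u (a, b) = ((u ^ 4 * a) mod p, (u ^ 6 * b) mod p)"

lemma scale_mem_two_torsion_curves:
  assumes p: "prime p" "p > 2" and E: "E \<in> two_torsion_curves p" and u: "u \<in> {1..<p}"
  shows "scale p u E \<in> two_torsion_curves p"
proof -
  obtain a b where ab: "E = (a, b)"
    by fastforce
  note G_iff = mem_two_torsion_curves_iff[OF p]
  from E ab have nonsingular: "\<not> p dvd 4 * a ^ 3 + 27 * b ^ 2" and "cubic_roots p (a, b) \<noteq> {}"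
    using G_iff by blast+
  then obtain x where x: "x \<in> {0..<p}" "p dvd x ^ 3 + a * x + b"
    by auto
  define a' b' x' where "a' = (u ^ 4 * a) mod p" "b' = (u ^ 6 * b) mod p" "x' = (u ^ 2 * x) mod p"
  have "\<not> p dvd u"
    using u unit_residue_not_dvd by blast
  have "[4 * a' ^ 3 + 27 * b' ^ 2 = 4 * (u ^ 4 * a) ^ 3 + 27 * (u ^ 6 * b) ^ 2] (mod p)"
    unfolding a'_b'_x'_def by (intro cong_add cong_mult cong_pow cong_refl) (simp_all add: cong_def)
  also have "4 * (u ^ 4 * a) ^ 3 + 27 * (u ^ 6 * b) ^ 2 = u ^ 12 * (4 * a ^ 3 + 27 * b ^ 2)"
    by (simp add: algebra_simps power_mult_distrib flip: power_mult)
  finally have "\<not> p dvd 4 * a' ^ 3 + 27 * b' ^ 2"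
    using nonsingular \<open>\<not> p dvd u\<close> p(1) by (simp add: cong_dvd_iff prime_dvd_mult_iff prime_dvd_power_iff)
  moreover have "[x' ^ 3 + a' * x' + b' = (u ^ 2 * x) ^ 3 + (u ^ 4 * a) * (u ^ 2 * x) + u ^ 6 * b] (mod p)"
    unfolding a'_b'_x'_def by (intro cong_add cong_mult cong_pow) (simp_all add: cong_def)
  moreover have "(u ^ 2 * x) ^ 3 + (u ^ 4 * a) * (u ^ 2 * x) + u ^ 6 * b = u ^ 6 * (x ^ 3 + a * x + b)"
    by (simp add: algebra_simps power_mult_distrib flip: power_mult power_add)
  ultimately have "x' \<in> cubic_roots p (a', b')" "\<not> p dvd 4 * a' ^ 3 + 27 * b' ^ 2"
    using x p prime_gt_0_int[of p] by (simp_all add: a'_b'_x'_def cong_dvd_iff)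
  moreover have "a' \<in> {0..<p}" "b' \<in> {0..<p}"
    using p prime_gt_0_int[of p] by (simp_all add: a'_b'_x'_def)
  ultimately show ?thesis
    using G_iff by (auto simp: ab a'_b'_x'_def simp del: cubic_roots.simps)
qed

lemma scale_mod: "scale p (u mod p) E = scale p u E"
proof (cases E)
  case (Pair a b)
  have "[(u mod p) ^ k * c = u ^ k * c] (mod p)" for k c
    by (intro cong_mult cong_pow cong_refl) (simp add: cong_def)
  then show ?thesis
    by (simp add: Pair cong_def)
qed

lemma ec_iso_iff_scale:
  assumes p: "p > 0" and E': "E' \<in> {0..<p} \<times> {0..<p}"
  shows "(E, E') \<in> ec_iso p \<longleftrightarrow> (\<exists>u\<in>{1..<p}. E' = scale p u E)"
proof -
  obtain a b a' b' where ab: "E = (a, b)" "E' = (a', b')"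
    by fastforce
  have "(E, E') \<in> ec_iso p \<longleftrightarrow> (\<exists>u. \<not> p dvd u \<and> E' = scale p u E)"
    using E' by (auto simp: ec_iso_def ab dvd_eq_mod_eq_0)
  also have "\<dots> \<longleftrightarrow> (\<exists>u\<in>{1..<p}. E' = scale p u E)"
    using p mod_mem_units scale_mod unit_residue_not_dvd by metis
  finally show ?thesis .
qed

lemma scale_one: "E \<in> {0..<p} \<times> {0..<p} \<Longrightarrow> scale p 1 E = E"
  by auto

lemma scale_scale: "scale p v (scale p u E) = scale p ((u * v) mod p) E"
proof -
  obtain a b where ab: "E = (a, b)"
    by fastforce
  have "[v ^ k * ((u ^ k * c) mod p) = (u * v) ^ k * c] (mod p)" for k c
  proof -
    have "[v ^ k * ((u ^ k * c) mod p) = v ^ k * (u ^ k * c)] (mod p)"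
      by (intro cong_mult cong_refl) (simp add: cong_def)
    then show ?thesis
      by (simp add: power_mult_distrib ac_simps)
  qed
  then have "scale p v (scale p u E) = scale p (u * v) E"
    by (simp add: ab cong_def)
  then show ?thesis
    by (simp only: scale_mod)
qed

lemma Restr_ec_iso_iff:
  assumes p: "prime p" "p > 2"
  shows "(E, E') \<in> Restr (ec_iso p) (two_torsion_curves p) \<longleftrightarrow>
    E \<in> two_torsion_curves p \<and> (\<exists>u\<in>{1..<p}. E' = scale p u E)"
  using ec_iso_iff_scale[OF prime_gt_0_int[OF p(1)]] two_torsion_curves_subset
    scale_mem_two_torsion_curves[OF p] by blast

lemma scale_inverse:
  assumes p: "prime p" and u: "u \<in> {1..<p}" and E: "E \<in> {0..<p} \<times> {0..<p}"
  obtains v where "v \<in> {1..<p}" "scale p v (scale p u E) = E"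
proof -
  have "coprime u p"
    using prime_imp_coprime[OF p unit_residue_not_dvd[OF u]] by (simp add: coprime_commute)
  then obtain v where "[u * v = 1] (mod p)"
    using cong_solve_coprime_int by blast
  then have "(u * v) mod p = 1"
    using prime_gt_1_int[OF p] by (simp add: cong_def)
  then have "(u * (v mod p)) mod p = 1" and "\<not> p dvd v"
    by (auto simp: mod_mult_right_eq)
  then have "scale p (v mod p) (scale p u E) = E"
    using E by (simp add: scale_scale scale_one)
  moreover have "v mod p \<in> {1..<p}"
    using \<open>\<not> p dvd v\<close> mod_mem_units prime_gt_0_int[OF p] by blast
  ultimately show thesis
    using that by blast
qed

lemma equiv_Restr_ec_iso:
  assumes p: "prime p" "p > 2"
  shows "equiv (two_torsion_curves p) (Restr (ec_iso p) (two_torsion_curves p))"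
proof (rule equivI)
  let ?G = "two_torsion_curves p"
  note iso_iff = Restr_ec_iso_iff[OF p]
  show "Restr (ec_iso p) ?G \<subseteq> ?G \<times> ?G"
    by blast
  show "refl_on ?G (Restr (ec_iso p) ?G)"
  proof (rule refl_onI)
    fix E assume "E \<in> ?G"
    moreover have "1 \<in> {1..<p}"
      using p by simp
    moreover have "E \<in> {0..<p} \<times> {0..<p}"
      using \<open>E \<in> ?G\<close> two_torsion_curves_subset by blast
    then have "E = scale p 1 E"
      using scale_one by simp
    ultimately show "(E, E) \<in> Restr (ec_iso p) ?G"
      by (intro iso_iff[THEN iffD2]) blast
  qed
  show "sym (Restr (ec_iso p) ?G)"
  proof (rule symI)
    fix E E' assume "(E, E') \<in> Restr (ec_iso p) ?G"
    then obtain u where E: "E \<in> ?G" "E' \<in> ?G" and u: "u \<in> {1..<p}" "E' = scale p u E"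
      using iso_iff[THEN iffD1] by blast
    moreover have "E \<in> {0..<p} \<times> {0..<p}"
      using E(1) two_torsion_curves_subset by blast
    ultimately obtain v where "v \<in> {1..<p}" "E = scale p v E'"
      using scale_inverse[OF p(1) u(1)] by metis
    then show "(E', E) \<in> Restr (ec_iso p) ?G"
      using E(2) by (intro iso_iff[THEN iffD2]) blast
  qed
  show "trans (Restr (ec_iso p) ?G)"
  proof (rule transI)
    fix E E' E'' assume "(E, E') \<in> Restr (ec_iso p) ?G" "(E', E'') \<in> Restr (ec_iso p) ?G"
    then obtain u v where "E \<in> ?G" "u \<in> {1..<p}" "v \<in> {1..<p}" "E'' = scale p v (scale p u E)"
      using iso_iff[THEN iffD1] by blast
    then have "E \<in> ?G" "(u * v) mod p \<in> {1..<p}" "E'' = scale p ((u * v) mod p) E"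
      using mult_mod_mem_units[OF p(1)] by (simp_all add: scale_scale)
    then show "(E, E'') \<in> Restr (ec_iso p) ?G"
      by (intro iso_iff[THEN iffD2]) blast
  qed
qed

lemma Restr_ec_iso_class:
  assumes "prime p" "p > 2" "E \<in> two_torsion_curves p"
  shows "Restr (ec_iso p) (two_torsion_curves p) `` {E} = (\<lambda>u. scale p u E) ` {1..<p}"
  using Restr_ec_iso_iff[OF assms(1,2)] assms(3) by blast

text \<open>The automorphism group of E is the group of k-th roots of unity for k = aut_order E:
  j = 0 gives k = 6, j = 1728 gives k = 4.\<close>
fun aut_order :: "int \<times> int \<Rightarrow> nat" where
  "aut_order (a, b) = (if a = 0 then 6 else if b = 0 then 4 else 2)"

lemma cong_power4_power6_iff_power2:
  fixes p u v :: int
  assumes p: "prime p" and u: "\<not> p dvd u"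
  shows "[v ^ 4 = u ^ 4] (mod p) \<and> [v ^ 6 = u ^ 6] (mod p) \<longleftrightarrow> [v ^ 2 = u ^ 2] (mod p)"
proof
  assume h: "[v ^ 4 = u ^ 4] (mod p) \<and> [v ^ 6 = u ^ 6] (mod p)"
  have "[v ^ 2 * u ^ 4 = v ^ 2 * v ^ 4] (mod p)"
    using h by (intro cong_mult cong_refl) (simp add: cong_sym)
  also have "v ^ 2 * v ^ 4 = v ^ 6"
    by (simp flip: power_add)
  also have "[v ^ 6 = u ^ 6] (mod p)"
    using h by simp
  also have "u ^ 6 = u ^ 2 * u ^ 4"
    by (simp flip: power_add)
  finally have "[v ^ 2 * u ^ 4 = u ^ 2 * u ^ 4] (mod p)" .
  moreover have "coprime (u ^ 4) p"
    using prime_imp_coprime[OF p u] by (simp add: coprime_commute)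
  ultimately show "[v ^ 2 = u ^ 2] (mod p)"
    using cong_mult_rcancel by blast
next
  assume "[v ^ 2 = u ^ 2] (mod p)"
  from cong_pow[OF this, of 2] cong_pow[OF this, of 3]
  show "[v ^ 4 = u ^ 4] (mod p) \<and> [v ^ 6 = u ^ 6] (mod p)"
    by (simp flip: power_mult)
qed

lemma scale_eq_scale_iff:
  assumes p: "prime p" "p > 2" and E: "E \<in> two_torsion_curves p"
    and u: "u \<in> {1..<p}" and v: "v \<in> {1..<p}"
  shows "scale p v E = scale p u E \<longleftrightarrow> [v ^ aut_order E = u ^ aut_order E] (mod p)"
proof -
  obtain a b where ab: "E = (a, b)"
    by fastforce
  with E have a: "a \<in> {0..<p}" and b: "b \<in> {0..<p}" and nonsingular: "\<not> p dvd 4 * a ^ 3 + 27 * b ^ 2"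
    using mem_two_torsion_curves_iff[OF p] by blast+
  have "scale p v E = scale p u E \<longleftrightarrow> [v ^ 4 * a = u ^ 4 * a] (mod p) \<and> [v ^ 6 * b = u ^ 6 * b] (mod p)"
    by (simp add: ab cong_def)
  moreover have "[v ^ 4 * a = u ^ 4 * a] (mod p) \<longleftrightarrow> [v ^ 4 = u ^ 4] (mod p)" if "a \<noteq> 0"
    using a that unit_residue_not_dvd[of a p] prime_imp_coprime[OF p(1)]
    by (intro cong_mult_rcancel) (simp add: coprime_commute)
  moreover have "[v ^ 6 * b = u ^ 6 * b] (mod p) \<longleftrightarrow> [v ^ 6 = u ^ 6] (mod p)" if "b \<noteq> 0"
    using b that unit_residue_not_dvd[of b p] prime_imp_coprime[OF p(1)]
    by (intro cong_mult_rcancel) (simp add: coprime_commute)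
  moreover have "a \<noteq> 0 \<or> b \<noteq> 0"
    using nonsingular by auto
  ultimately show ?thesis
    using cong_power4_power6_iff_power2[OF p(1) unit_residue_not_dvd[OF u], of v] by (auto simp: ab)
qed

lemma card_orbit_mult_gcd:
  assumes p: "prime p" "p > 2" and E: "E \<in> two_torsion_curves p"
  shows "card (Restr (ec_iso p) (two_torsion_curves p) `` {E}) * gcd (aut_order E) (nat p - 1) = nat p - 1"
proof -
  have "aut_order E > 0"
    by (cases E) simp
  have "card ((\<lambda>u. scale p u E) ` {1..<p}) * gcd (aut_order E) (nat p - 1) = card {1..<p}"
  proof (rule card_image_mult_const_fiber)
    fix u assume u: "u \<in> {1..<p}"
    have "{v\<in>{1..<p}. scale p v E = scale p u E} = {v\<in>{1..<p}. [v ^ aut_order E = u ^ aut_order E] (mod p)}"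
      using scale_eq_scale_iff[OF p E u] by blast
    then show "card {v\<in>{1..<p}. scale p v E = scale p u E} = gcd (aut_order E) (nat p - 1)"
      using card_power_fiber_mod_prime[OF p(1) \<open>aut_order E > 0\<close> u] by simp
  qed simp
  then show ?thesis
    by (simp add: Restr_ec_iso_class[OF p E])
qed

lemma N2_eq_sum_gcd:
  assumes p: "prime p" "p > 2"
  shows "real (N2 p) = (\<Sum>E\<in>two_torsion_curves p. real (gcd (aut_order E) (nat p - 1)) / real (nat p - 1))"
proof -
  let ?G = "two_torsion_curves p" and ?R = "Restr (ec_iso p) (two_torsion_curves p)"
  have "real (N2 p) = (\<Sum>E\<in>?G. 1 / real (card (?R `` {E})))"
    using card_quotient_eq_sum_inverse_card_class[OF equiv_Restr_ec_iso[OF p] finite_two_torsion_curves]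
    by (simp add: N2_def two_torsion_curves_def)
  also have "\<dots> = (\<Sum>E\<in>?G. real (gcd (aut_order E) (nat p - 1)) / real (nat p - 1))"
  proof (rule sum.cong[OF refl])
    fix E assume "E \<in> ?G"
    define c g where "c = card (?R `` {E})" and "g = gcd (aut_order E) (nat p - 1)"
    have cg: "nat p - 1 = c * g"
      using card_orbit_mult_gcd[OF p \<open>E \<in> ?G\<close>] by (simp add: c_def g_def)
    have "c * g > 0"
      unfolding cg[symmetric] using p by simp
    then have "1 / real c = real g / real (c * g)"
      by simp
    then show "1 / real (card (?R `` {E})) = real (gcd (aut_order E) (nat p - 1)) / real (nat p - 1)"
      by (metis c_def g_def cg)
  qed
  finally show ?thesis .
qed

lemma j_zero_curve_mem:
  assumes p: "prime p" "p > 3" and u: "u \<in> {1..<p}"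
  shows "(0, (- (u ^ 3)) mod p) \<in> two_torsion_curves p"
proof -
  define b where "b = (- (u ^ 3)) mod p"
  have "[b = - (u ^ 3)] (mod p)"
    by (simp add: b_def cong_def)
  then have root: "p dvd u ^ 3 + b"
    by (simp only: cong_minus_iff_dvd_add)
  have "\<not> p dvd u ^ 3"
    using p(1) unit_residue_not_dvd[OF u] by (simp add: prime_dvd_power_iff)
  with root have "\<not> p dvd b"
    by (metis dvd_add_right_iff add.commute)
  moreover have "\<not> p dvd 27"
    using prime_dvd_power_iff[OF p(1), of 3 3] prime_gt_3_not_dvd[OF p] by simp
  ultimately have "\<not> p dvd 27 * b ^ 2"
    using p(1) by (simp add: prime_dvd_mult_iff prime_dvd_power_iff)
  moreover have "u \<in> cubic_roots p (0, b)"
    using u root by simp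
  moreover have "b \<in> {0..<p}"
    using p by (simp add: b_def)
  ultimately show ?thesis
    using mem_two_torsion_curves_iff[of p 0 b] p by (auto simp: b_def[symmetric] simp del: cubic_roots.simps)
qed

lemma j_zero_curves_eq_image:
  assumes p: "prime p" "p > 3"
  shows "{E \<in> two_torsion_curves p. fst E = 0} = (\<lambda>u. (0::int, (- (u ^ 3)) mod p)) ` {1..<p}"
proof (intro equalityI subsetI)
  fix E assume "E \<in> {E \<in> two_torsion_curves p. fst E = 0}"
  then obtain b where E: "E = (0, b)" and b: "b \<in> {0..<p}" and "\<not> p dvd 27 * b ^ 2"
    and "cubic_roots p (0, b) \<noteq> {}"
    using mem_two_torsion_curves_iff[of p 0] p by (cases E) auto
  then obtain x where x: "x \<in> {0..<p}" "p dvd x ^ 3 + b"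
    by auto
  have "\<not> p dvd b"
    using \<open>\<not> p dvd 27 * b ^ 2\<close> by (auto simp: power2_eq_square)
  with x have "x \<in> {1..<p}"
    by (cases "x = 0") auto
  moreover have "b = (- (x ^ 3)) mod p"
    using x(2) b cong_minus_iff_dvd_add[of b "x ^ 3" p] by (simp add: cong_def)
  ultimately show "E \<in> (\<lambda>u. (0::int, (- (u ^ 3)) mod p)) ` {1..<p}"
    using E by blast
qed (use j_zero_curve_mem[OF p] in auto)

lemma card_j_zero_curves:
  assumes p: "prime p" "p > 3"
  shows "card {E \<in> two_torsion_curves p. fst E = 0} * gcd 3 (nat p - 1) = nat p - 1"
proof -
  have "card ((\<lambda>u. (0::int, (- (u ^ 3)) mod p)) ` {1..<p}) * gcd 3 (nat p - 1) = card {1..<p}"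
  proof (rule card_image_mult_const_fiber)
    fix u assume u: "u \<in> {1..<p}"
    have "{v\<in>{1..<p}. (0::int, (- (v ^ 3)) mod p) = (0, (- (u ^ 3)) mod p)} =
        {v\<in>{1..<p}. [v ^ 3 = u ^ 3] (mod p)}"
      by (auto simp: cong_def[symmetric] cong_minus_minus_iff)
    then show "card {v\<in>{1..<p}. (0::int, (- (v ^ 3)) mod p) = (0, (- (u ^ 3)) mod p)} = gcd 3 (nat p - 1)"
      using card_power_fiber_mod_prime[OF p(1) _ u, of 3] by simp
  qed simp
  then show ?thesis
    by (simp add: j_zero_curves_eq_image[OF p])
qed

lemma card_j_1728_curves:
  assumes p: "prime p" "p > 3"
  shows "card {E \<in> two_torsion_curves p. fst E \<noteq> 0 \<and> snd E = 0} = nat p - 1"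
proof -
  have p2: "p > 2"
    using p by simp
  have "\<not> p dvd 4"
    using prime_dvd_mult_iff[OF p(1), of 2 2] prime_gt_3_not_dvd[OF p] by simp
  note G_iff = mem_two_torsion_curves_iff[OF p(1) p2]
  have "{E \<in> two_torsion_curves p. fst E \<noteq> 0 \<and> snd E = 0} = (\<lambda>a. (a, 0::int)) ` {1..<p}"
  proof (intro equalityI subsetI)
    fix E assume "E \<in> {E \<in> two_torsion_curves p. fst E \<noteq> 0 \<and> snd E = 0}"
    then obtain a where "E = (a, 0)" "a \<in> {0..<p}" "a \<noteq> 0"
      using G_iff by (cases E) auto
    then show "E \<in> (\<lambda>a. (a, 0::int)) ` {1..<p}"
      by auto
  next
    fix E assume "E \<in> (\<lambda>a. (a, 0::int)) ` {1..<p}"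
    then obtain a where E: "E = (a, 0)" and a: "a \<in> {1..<p}"
      by blast
    have "\<not> p dvd 4 * a ^ 3"
      using \<open>\<not> p dvd 4\<close> unit_residue_not_dvd[OF a] p(1) by (simp add: prime_dvd_mult_iff prime_dvd_power_iff)
    moreover have "0 \<in> cubic_roots p (a, 0)"
      using p by simp
    ultimately show "E \<in> {E \<in> two_torsion_curves p. fst E \<noteq> 0 \<and> snd E = 0}"
      using a p G_iff[of a 0] by (auto simp: E simp del: cubic_roots.simps)
  qed
  moreover have "inj (\<lambda>a::int. (a, 0::int))"
    by (simp add: inj_on_def)
  ultimately show ?thesis
    by (simp add: card_image inj_on_subset)
qed

lemma sum_aut_order:
  fixes f :: "nat \<Rightarrow> real"
  assumes "finite A"
  shows "(\<Sum>E\<in>A. f (aut_order E)) = real (card A) * f 2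
    + real (card {E\<in>A. fst E = 0}) * (f 6 - f 2) + real (card {E\<in>A. fst E \<noteq> 0 \<and> snd E = 0}) * (f 4 - f 2)"
proof -
  have "f (aut_order E) = f 2 + (if fst E = 0 then f 6 - f 2 else 0)
      + (if fst E \<noteq> 0 \<and> snd E = 0 then f 4 - f 2 else 0)" for E
    by (cases E) auto
  then show ?thesis
    using assms by (simp add: sum.distrib sum.inter_filter[symmetric])
qed

lemma N2_eq_gcd_formula:
  fixes p :: int
  assumes p: "prime p" "p > 3"
  shows "real (N2 p) = (real (gcd 6 (nat p - 1)) - 2) / real (gcd 3 (nat p - 1))
    + real (gcd 4 (nat p - 1)) + 4 * (p - 2) / 3"
proof -
  define n where "n = nat p - 1"
  define g where "g k = real (gcd k n)" for k
  let ?G = "two_torsion_curves p"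
  have p2: "p > 2"
    using p by simp
  have n: "real_of_int p = real n + 1" "n > 0"
    using p by (simp_all add: n_def of_nat_diff)
  have "even n"
    using prime_odd_int[OF p(1) p2] p by (simp add: n_def even_nat_iff)
  then have g2: "g 2 = 2"
    by (simp add: g_def)
  have g3: "g 3 > 0"
    by (simp add: g_def)
  have j0: "real (card {E\<in>?G. fst E = 0}) = n / g 3"
    using card_j_zero_curves[OF p] g3 by (simp add: g_def n_def field_simps flip: of_nat_mult)
  have "real_of_int (3 * int (card ?G)) = real_of_int ((p - 1) * (2 * p - 1))"
    using card_two_torsion_curves[OF p] by simp
  then have G: "real (card ?G) = n * (2 * n + 1) / 3"
    using n by (simp add: algebra_simps)
  have j1728: "real (card {E\<in>?G. fst E \<noteq> 0 \<and> snd E = 0}) = n"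
    using card_j_1728_curves[OF p] by (simp add: n_def)
  have "real (N2 p) = (\<Sum>E\<in>?G. g (aut_order E) / n)"
    using N2_eq_sum_gcd[OF p(1) p2] by (simp add: g_def n_def)
  also have "\<dots> = real (card ?G) * (g 2 / n) + real (card {E\<in>?G. fst E = 0}) * (g 6 / n - g 2 / n)
      + real (card {E\<in>?G. fst E \<noteq> 0 \<and> snd E = 0}) * (g 4 / n - g 2 / n)"
    by (rule sum_aut_order[OF finite_two_torsion_curves])
  also have "\<dots> = (g 6 - 2) / g 3 + g 4 + 4 * (n - 1) / 3"
    unfolding G j0 j1728 g2 using n g3 by (simp add: field_simps)
  also have "\<dots> = (real (gcd 6 (nat p - 1)) - 2) / real (gcd 3 (nat p - 1))
      + real (gcd 4 (nat p - 1)) + 4 * (p - 2) / 3"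
    using p by (simp add: g_def n_def of_nat_diff)
  finally show ?thesis .
qed

lemma gcd_nat_pred_mod_12:
  fixes p :: int and k :: nat
  assumes "k dvd 12" "p \<ge> 1"
  shows "gcd k (nat p - 1) = gcd k (nat ((p mod 12 - 1) mod int k))"
proof -
  have "int k dvd 12"
    using assms(1) by presburger
  then have "(p mod 12 - 1) mod int k = (p - 1) mod int k"
    by (metis mod_diff_left_eq mod_mod_cancel)
  then have "nat ((p mod 12 - 1) mod int k) = (nat p - 1) mod k"
    using assms(2) by (simp add: nat_mod_distrib nat_diff_distrib)
  moreover have "gcd k m = gcd k (m mod k)" for m :: nat
    by (metis gcd.commute gcd_red_nat)
  ultimately show ?thesis
    by simp
qed

theorem proposition9:
  fixes p :: int
  assumes "prime p" and "p > 3"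
  shows "(p mod 12 = 1 \<longrightarrow> real (N2 p) = (4 * p + 8) / 3) \<and>
         (p mod 12 = 5 \<longrightarrow> real (N2 p) = (4 * p + 4) / 3) \<and>
         (p mod 12 = 7 \<longrightarrow> real (N2 p) = (4 * p + 2) / 3) \<and>
         (p mod 12 = 11 \<longrightarrow> real (N2 p) = (4 * p - 2) / 3)"
proof -
  \<comment> \<open>the one gcd below that is not settled by a divisibility test\<close>
  have "gcd (6::nat) 4 = 2"
    by (simp add: gcd_non_0_nat)
  then show ?thesis
    using N2_eq_gcd_formula[OF assms] gcd_nat_pred_mod_12[of _ p] assms
    by (intro conjI impI) (simp_all add: field_simps)
qed

end
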